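(* Let $E/\mathbb{Q}$ be given by the model $y^2=x^3+Ax+B$ ($A,B\in\mathbb{Z}$) described in the context and $X=\max\{|A|^3,|B|^2\}$. Let $0\le\delta\le1$. Let $P,Q\in E(\mathbb{Q})$ satisfy $X^{1/6}\le x(P)<x(Q)$ and $x(P)=x_1/s$, $x(Q)=x_2/s$ with $x_1,x_2\in\mathbb{Z}$, $s$ a positive integer, $\gcd(x_1,s)\le s^\delta$ and $\gcd(x_2,s)\le s^\delta$. Then $$h(P+Q)\le h(P)+2h(Q)+3\delta\,h(s)+2.9.$$
   Context: The model is obtained from a global minimal Weierstrass equation of $E$ by the substitution $x\mapsto \frac{1}{36}(x-3b_2)$, $y\mapsto \frac12(\frac{y}{108}-\frac{a_1}{36}(x-3b_2)-a_3)$. $h$ is the absolute logarithmic Weil height (so $h(s)=\log s$), and $h(P)=h(x(P))$. *)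

theory Defs
  imports Complex_Main
begin

section \<open>Weierstrass equations  y^2 + a1 xy + a3 y = x^3 + a2 x^2 + a4 x + a6\<close>

definition wb2 :: "'a::comm_ring_1 \<Rightarrow> 'a \<Rightarrow> 'a \<Rightarrow> 'a \<Rightarrow> 'a \<Rightarrow> 'a" where
  "wb2 a1 a2 a3 a4 a6 = a1^2 + 4*a2"
definition wb4 :: "'a::comm_ring_1 \<Rightarrow> 'a \<Rightarrow> 'a \<Rightarrow> 'a \<Rightarrow> 'a \<Rightarrow> 'a" where
  "wb4 a1 a2 a3 a4 a6 = 2*a4 + a1*a3"
definition wb6 :: "'a::comm_ring_1 \<Rightarrow> 'a \<Rightarrow> 'a \<Rightarrow> 'a \<Rightarrow> 'a \<Rightarrow> 'a" where
  "wb6 a1 a2 a3 a4 a6 = a3^2 + 4*a6"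
definition wb8 :: "'a::comm_ring_1 \<Rightarrow> 'a \<Rightarrow> 'a \<Rightarrow> 'a \<Rightarrow> 'a \<Rightarrow> 'a" where
  "wb8 a1 a2 a3 a4 a6 = a1^2*a6 + 4*a2*a6 - a1*a3*a4 + a2*a3^2 - a4^2"

definition wdisc :: "'a::comm_ring_1 \<Rightarrow> 'a \<Rightarrow> 'a \<Rightarrow> 'a \<Rightarrow> 'a \<Rightarrow> 'a" where
  "wdisc a1 a2 a3 a4 a6 =
     (let b2 = wb2 a1 a2 a3 a4 a6; b4 = wb4 a1 a2 a3 a4 a6;
          b6 = wb6 a1 a2 a3 a4 a6; b8 = wb8 a1 a2 a3 a4 a6
      in - (b2^2*b8) - 8*b4^3 - 27*b6^2 + 9*b2*b4*b6)"

definition wc4 :: "'a::comm_ring_1 \<Rightarrow> 'a \<Rightarrow> 'a \<Rightarrow> 'a \<Rightarrow> 'a \<Rightarrow> 'a" where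
  "wc4 a1 a2 a3 a4 a6 = (wb2 a1 a2 a3 a4 a6)^2 - 24 * wb4 a1 a2 a3 a4 a6"
definition wc6 :: "'a::comm_ring_1 \<Rightarrow> 'a \<Rightarrow> 'a \<Rightarrow> 'a \<Rightarrow> 'a \<Rightarrow> 'a" where
  "wc6 a1 a2 a3 a4 a6 = - ((wb2 a1 a2 a3 a4 a6)^3)
      + 36 * wb2 a1 a2 a3 a4 a6 * wb4 a1 a2 a3 a4 a6 - 216 * wb6 a1 a2 a3 a4 a6"

text \<open>Coefficients of the model obtained by the change of variables
  x = u^2 x' + r, y = u^3 y' + u^2 s x' + t (Silverman, Table 3.1).\<close>
definition wtrans :: "rat \<Rightarrow> rat \<Rightarrow> rat \<Rightarrow> rat \<Rightarrow> rat \<Rightarrow> rat \<Rightarrow> rat \<Rightarrow> rat \<Rightarrow> rat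
     \<Rightarrow> rat \<times> rat \<times> rat \<times> rat \<times> rat" where
  "wtrans u r s t a1 a2 a3 a4 a6 =
     ((a1 + 2*s) / u,
      (a2 - s*a1 + 3*r - s^2) / u^2,
      (a3 + r*a1 + 2*t) / u^3,
      (a4 - s*a3 + 2*r*a2 - (t + r*s)*a1 + 3*r^2 - 2*s*t) / u^4,
      (a6 + r*a4 + r^2*a2 + r^3 - t*a3 - t^2 - r*t*a1) / u^6)"

definition global_minimal :: "int \<Rightarrow> int \<Rightarrow> int \<Rightarrow> int \<Rightarrow> int \<Rightarrow> bool" where
  "global_minimal a1 a2 a3 a4 a6 \<longleftrightarrow>
     wdisc a1 a2 a3 a4 a6 \<noteq> 0 \<and>
     (\<forall>u r s t a1' a2' a3' a4' a6'. u \<noteq> 0 \<longrightarrow>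
        wtrans u r s t (of_int a1) (of_int a2) (of_int a3) (of_int a4) (of_int a6)
          = (rat_of_int a1', rat_of_int a2', rat_of_int a3', rat_of_int a4', rat_of_int a6') \<longrightarrow>
        \<bar>wdisc a1 a2 a3 a4 a6\<bar> \<le> \<bar>wdisc a1' a2' a3' a4' a6'\<bar>)"

definition on_curve :: "int \<Rightarrow> int \<Rightarrow> rat \<times> rat \<Rightarrow> bool" where
  "on_curve A B P \<longleftrightarrow> (snd P)^2 = (fst P)^3 + of_int A * fst P + of_int B"

text \<open>Sum of two affine points with distinct x-coordinates (chord construction);
  the result is again an affine point.\<close>
definition chord_add :: "rat \<times> rat \<Rightarrow> rat \<times> rat \<Rightarrow> rat \<times> rat" where
  "chord_add P Q =
     (let l = (snd Q - snd P) / (fst Q - fst P);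
          x3 = l^2 - fst P - fst Q
      in (x3, l * (fst P - x3) - snd P))"

definition hgt :: "rat \<Rightarrow> real" where
  "hgt q = (let (a, b) = quotient_of q in ln (real_of_int (max \<bar>a\<bar> b)))"

definition hpt :: "rat \<times> rat \<Rightarrow> real" where
  "hpt P = hgt (fst P)"

end

theory Submission
  imports Defs
begin

(* Write x(P) = x1/s and x(Q) = x2/s.  The discriminant is nonzero, so X >= 1, and
   x(P) >= X^(1/6) gives s <= x1 < x2, |A| s^2 <= x1^2 and |B| s^3 <= x1^3.  Since
   s^3 y(P)^2 and s^3 y(Q)^2 are integers, so is m = s^3 y(P) y(Q), and the chord
   formula gives x(P+Q) = N/D with N = (x1 x2 + A s^2)(x1 + x2) + 2 B s^3 - 2m and
   D = s (x2 - x1)^2, both of absolute value at most 12 x1 x2^2.  Hence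
   h(P+Q) <= log 12 + log x1 + 2 log x2, while log xi <= h(xi/s) + log gcd(xi, s)
   <= h(xi/s) + delta log s. *)

lemma hgt_of_int_div:
  fixes x s :: int
  assumes "s > 0"
  shows "hgt (of_int x / of_int s) = ln (real_of_int (max \<bar>x\<bar> s)) - ln (real_of_int (gcd x s))"
proof -
  define g where "g = gcd x s"
  have "g > 0" "g dvd x" "g dvd s" using assms by (simp_all add: g_def)
  have "quotient_of (of_int x / of_int s) = (x div g, s div g)"
    using assms
    by (simp add: Fract_of_int_quotient [symmetric] quotient_of_Fract normalize_def Let_def g_def)
  moreover have "real_of_int (max \<bar>x div g\<bar> (s div g)) = real_of_int (max \<bar>x\<bar> s) / real_of_int g"
  proof -
    have "real_of_int (\<bar>x\<bar> div g) = \<bar>x\<bar> / g" "real_of_int (s div g) = s / g"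
      using \<open>g dvd x\<close> \<open>g dvd s\<close> by (simp_all add: real_of_int_div)
    then show ?thesis
      using \<open>g > 0\<close> \<open>g dvd x\<close> by (simp add: abs_div of_int_max max_divide_distrib_right)
  qed
  moreover have "max \<bar>x\<bar> s > 0" using assms by simp
  ultimately show ?thesis
    using \<open>g > 0\<close> by (simp add: hgt_def ln_div g_def)
qed

lemma hgt_of_int_div_le:
  fixes N D :: int
  assumes "0 < D"
  shows "hgt (of_int N / of_int D) \<le> ln (real_of_int (max \<bar>N\<bar> D))"
proof -
  have "1 \<le> gcd N D" using assms by (simp add: int_one_le_iff_zero_less)
  then show ?thesis using hgt_of_int_div[OF assms, of N] by simp
qed

lemma ln_le_hgt_of_int_div:
  fixes x s :: int
  assumes "0 < s" "s \<le> x" "real_of_int (gcd x s) \<le> real_of_int s powr \<delta>"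
  shows "ln (real_of_int x) \<le> hgt (of_int x / of_int s) + \<delta> * ln (real_of_int s)"
proof -
  have "ln (real_of_int (gcd x s)) \<le> ln (real_of_int s powr \<delta>)"
    using assms(1,3) by (intro ln_mono) simp_all
  also have "\<dots> = \<delta> * ln (real_of_int s)" using assms(1) by (simp add: ln_powr)
  finally show ?thesis using hgt_of_int_div[OF assms(1), of x] assms(1,2) by simp
qed

lemma rat_power_eq_of_int_imp_Ints:
  fixes q :: rat and k :: int
  assumes "q ^ n = of_int k" "n > 0"
  shows "q \<in> \<int>"
proof -
  obtain a b where qb: "quotient_of q = (a, b)" by fastforce
  have "b > 0" "coprime a b" "q = of_int a / of_int b"
    using quotient_of_denom_pos[OF qb] quotient_of_coprime[OF qb] quotient_of_div[OF qb] by simp_all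
  then have "rat_of_int (a ^ n) = rat_of_int (k * b ^ n)"
    using assms(1) \<open>b > 0\<close> by (simp add: power_divide divide_eq_eq)
  then have "a ^ n = k * b ^ n" by (simp only: of_int_eq_iff)
  then have "b ^ n dvd a ^ n" by simp
  moreover have "coprime (b ^ n) (a ^ n)" using \<open>coprime a b\<close> by (simp add: coprime_commute)
  ultimately have "is_unit (b ^ n)" using coprime_common_divisor dvd_refl by blast
  moreover have "b dvd b ^ n" using assms(2) by simp
  ultimately have "b dvd 1" by (rule dvd_trans[rotated])
  from zdvd_imp_le[OF this] have "b = 1" using \<open>b > 0\<close> by simp
  then show ?thesis using \<open>q = of_int a / of_int b\<close> by simp
qed

lemma chord_add_x_times_square:
  assumes "on_curve A B P" "on_curve A B Q" "fst P \<noteq> fst Q"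
  shows "fst (chord_add P Q) * (fst Q - fst P)^2
           = (fst P * fst Q + of_int A) * (fst P + fst Q) + 2 * of_int B - 2 * snd P * snd Q"
proof -
  obtain xP yP xQ yQ where PQ: "P = (xP, yP)" "Q = (xQ, yQ)" by fastforce
  have curve: "yP^2 = xP^3 + of_int A * xP + of_int B" "yQ^2 = xQ^3 + of_int A * xQ + of_int B"
    using assms(1,2) by (simp_all add: PQ on_curve_def)
  have "xQ - xP \<noteq> 0" using assms(3) by (simp add: PQ)
  then have "fst (chord_add P Q) * (xQ - xP)^2 = (yQ - yP)^2 - (xP + xQ) * (xQ - xP)^2"
    by (simp add: PQ chord_add_def Let_def power_divide algebra_simps)
  also have "\<dots> = (xP * xQ + of_int A) * (xP + xQ) + 2 * of_int B - 2 * yP * yQ"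
    using curve by algebra
  finally show ?thesis by (simp add: PQ)
qed

lemma on_curve_scaled:
  fixes A B s x :: int
  assumes "on_curve A B P" "s \<noteq> 0" "fst P = of_int x / of_int s"
  shows "of_int s ^ 3 * (snd P)^2 = of_int (x^3 + A * s^2 * x + B * s^3)"
  using assms by (simp add: on_curve_def field_simps power3_eq_cube power2_eq_square)

lemma chord_add_x_int_quotient:
  fixes A B s x1 x2 :: int
  assumes "on_curve A B P" "on_curve A B Q" "s > 0" "x1 \<noteq> x2"
    and "fst P = of_int x1 / of_int s" "fst Q = of_int x2 / of_int s"
  obtains m where "m^2 = (x1^3 + A * s^2 * x1 + B * s^3) * (x2^3 + A * s^2 * x2 + B * s^3)"
    and "fst (chord_add P Q)
           = of_int ((x1 * x2 + A * s^2) * (x1 + x2) + 2 * B * s^3 - 2 * m) / of_int (s * (x2 - x1)^2)"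
proof -
  let ?F = "\<lambda>x. x^3 + A * s^2 * x + B * s^3"
  have "(of_int s ^ 3 * snd P * snd Q)^2 = (of_int s ^ 3 * (snd P)^2) * (of_int s ^ 3 * (snd Q)^2)"
    by algebra
  also have "\<dots> = rat_of_int (?F x1 * ?F x2)"
    using on_curve_scaled[OF assms(1) _ assms(5)] on_curve_scaled[OF assms(2) _ assms(6)] assms(3)
    by simp
  finally have "(of_int s ^ 3 * snd P * snd Q)^2 = rat_of_int (?F x1 * ?F x2)" .
  moreover from this obtain m where m: "of_int s ^ 3 * snd P * snd Q = rat_of_int m"
    using rat_power_eq_of_int_imp_Ints by (metis Ints_cases zero_less_numeral)
  ultimately have "m^2 = ?F x1 * ?F x2" by (metis of_int_eq_iff of_int_power)
  moreover have "fst (chord_add P Q) * of_int (s * (x2 - x1)^2)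
                   = of_int ((x1 * x2 + A * s^2) * (x1 + x2) + 2 * B * s^3 - 2 * m)"
  proof -
    have "fst P \<noteq> fst Q" using assms(3-6) by simp
    have "fst (chord_add P Q) * of_int (s * (x2 - x1)^2)
            = of_int s ^ 3 * (fst (chord_add P Q) * (fst Q - fst P)^2)"
      using assms(3) by (simp add: assms(5,6) field_simps power2_eq_square power3_eq_cube)
    also have "\<dots> = of_int s ^ 3 * ((fst P * fst Q + of_int A) * (fst P + fst Q) + 2 * of_int B)
                     - 2 * (of_int s ^ 3 * snd P * snd Q)"
      by (simp add: chord_add_x_times_square[OF assms(1,2) \<open>fst P \<noteq> fst Q\<close>] algebra_simps)
    also have "\<dots> = of_int ((x1 * x2 + A * s^2) * (x1 + x2) + 2 * B * s^3 - 2 * m)"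
      unfolding m using assms(3) by (simp add: assms(5,6) field_simps power2_eq_square power3_eq_cube)
    finally show ?thesis .
  qed
  ultimately show ?thesis
    using that assms(3,4) by (simp add: eq_divide_eq)
qed

lemma cubic_abs_le:
  fixes a b x0 x :: "'a::linordered_idom"
  assumes "0 \<le> x0" "x0 \<le> x" "\<bar>a\<bar> \<le> x0^2" "\<bar>b\<bar> \<le> x0^3"
  shows "\<bar>x^3 + a * x + b\<bar> \<le> 3 * x^3"
proof -
  have "x0^2 \<le> x^2" "x0^3 \<le> x^3" using assms(1,2) by (simp_all add: power_mono)
  moreover have "0 \<le> x" using assms(1,2) by simp
  ultimately have "\<bar>a * x\<bar> \<le> x^2 * x"
    using assms(3) mult_right_mono[of "\<bar>a\<bar>" "x^2" x] by (simp add: abs_mult)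
  moreover have "\<bar>b\<bar> \<le> x^3" using \<open>x0^3 \<le> x^3\<close> assms(4) by simp
  ultimately show ?thesis
    using assms(1,2) unfolding abs_le_iff by (simp add: power3_eq_cube power2_eq_square)
qed

lemma chord_numerator_abs_le:
  fixes a b m x1 x2 :: "'a::linordered_idom"
  assumes "0 \<le> x1" "x1 \<le> x2" "\<bar>a\<bar> \<le> x1^2" "\<bar>b\<bar> \<le> x1^3"
    and "m^2 = (x1^3 + a * x1 + b) * (x2^3 + a * x2 + b)"
  shows "\<bar>(x1 * x2 + a) * (x1 + x2) + 2 * b - 2 * m\<bar> \<le> 12 * (x1 * x2^2)"
proof -
  have x1_sq: "x1^2 \<le> x1 * x2"
    using assms(1,2) by (simp add: power2_eq_square mult_left_mono)
  have x1_cube: "x1^3 \<le> x1 * x2^2"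
    using assms(1,2) mult_left_mono[OF power_mono[of x1 x2 2], of x1]
    by (simp add: power2_eq_square power3_eq_cube)
  have "m^2 \<le> \<bar>x1^3 + a * x1 + b\<bar> * \<bar>x2^3 + a * x2 + b\<bar>"
    unfolding assms(5) abs_mult [symmetric] by (rule abs_ge_self)
  also have "\<dots> \<le> (3 * x1^3) * (3 * x2^3)"
    using cubic_abs_le[OF assms(1) order.refl assms(3,4)] cubic_abs_le[OF assms(1,2,3,4)] assms(1)
    by (intro mult_mono) simp_all
  also have "\<dots> = 9 * ((x1^2 * x2^3) * x1)" by (simp add: power2_eq_square power3_eq_cube)
  also have "\<dots> \<le> 9 * ((x1^2 * x2^3) * x2)" using assms(1,2) by (simp add: mult_left_mono)
  also have "\<dots> = (3 * (x1 * x2^2))^2" by (simp add: power2_eq_square power3_eq_cube)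
  finally have "\<bar>m\<bar> \<le> \<bar>3 * (x1 * x2^2)\<bar>" by (simp only: abs_le_square_iff)
  then have m: "\<bar>m\<bar> \<le> 3 * (x1 * x2^2)" using assms(1) by simp
  have "\<bar>x1 * x2 + a\<bar> \<le> 2 * (x1 * x2)"
    using assms(3) x1_sq abs_triangle_ineq[of "x1 * x2" a] assms(1,2) by simp
  then have u: "\<bar>(x1 * x2 + a) * (x1 + x2)\<bar> \<le> 4 * (x1 * x2^2)"
    using mult_mono[of _ "2 * (x1 * x2)" "x1 + x2" "2 * x2"] assms(1,2)
    by (simp add: abs_mult power2_eq_square)
  show ?thesis
    using m u assms(4) x1_cube unfolding abs_le_iff by linarith
qed

lemma scaled_coeffs_le_of_powr_le:
  fixes A B s x :: int
  assumes "1 \<le> max (\<bar>A\<bar>^3) (B^2)" "0 < s"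
    and "real_of_int (max (\<bar>A\<bar>^3) (B^2)) powr (1/6) \<le> real_of_int x / real_of_int s"
  shows "s \<le> x" "\<bar>A\<bar> * s^2 \<le> x^2" "\<bar>B\<bar> * s^3 \<le> x^3"
proof -
  define X where "X = max (\<bar>A\<bar>^3) (B^2)"
  have "real_of_int X = (real_of_int X powr (1/6)) ^ 6"
    using assms(1) by (simp add: X_def powr_powr flip: powr_realpow)
  also have "\<dots> \<le> (real_of_int x / real_of_int s) ^ 6"
    using assms(3) by (simp add: X_def power_mono)
  finally have "real_of_int X * real_of_int s ^ 6 \<le> real_of_int x ^ 6"
    using assms(2) by (simp add: power_divide field_simps)
  then have "X * s^6 \<le> x^6" by (metis of_int_le_iff of_int_mult of_int_power)
  have "0 \<le> real_of_int x / real_of_int s"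
    using order_trans[OF powr_ge_zero assms(3)] .
  then have "0 \<le> x" using assms(2) by (simp add: zero_le_divide_iff)
  have "s^6 \<le> x^6"
    using \<open>X * s^6 \<le> x^6\<close> assms(1) mult_right_mono[of 1 X "s^6"] by (simp add: X_def)
  then show "s \<le> x" using \<open>0 \<le> x\<close> assms(2) by simp
  have "(\<bar>A\<bar> * s^2)^3 \<le> (x^2)^3"
    using \<open>X * s^6 \<le> x^6\<close> mult_right_mono[of "\<bar>A\<bar>^3" X "s^6"]
    by (simp add: X_def power_mult_distrib flip: power_mult)
  then show "\<bar>A\<bar> * s^2 \<le> x^2" using power_mono_iff[of "\<bar>A\<bar> * s^2" "x^2" 3] by simp
  have "(\<bar>B\<bar> * s^3)^2 \<le> (x^3)^2"
    using \<open>X * s^6 \<le> x^6\<close> mult_right_mono[of "B^2" X "s^6"]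
    by (simp add: X_def power_mult_distrib flip: power_mult)
  then show "\<bar>B\<bar> * s^3 \<le> x^3"
    using power_mono_iff[of "\<bar>B\<bar> * s^3" "x^3" 2] \<open>0 \<le> x\<close> assms(2) by simp
qed

lemma wc4_cube_minus_wc6_square:
  "(wc4 a1 a2 a3 a4 a6)^3 - (wc6 a1 a2 a3 a4 a6)^2 = (1728::int) * wdisc a1 a2 a3 a4 a6"
  unfolding wc4_def wc6_def wdisc_def wb2_def wb4_def wb6_def wb8_def Let_def by algebra

lemma global_minimal_short_coeffs_nonzero:
  fixes A B :: int
  assumes "global_minimal a1 a2 a3 a4 a6"
    and "A = -27 * wc4 a1 a2 a3 a4 a6" and "B = -54 * wc6 a1 a2 a3 a4 a6"
  shows "1 \<le> max (\<bar>A\<bar>^3) (B^2)"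
proof (rule ccontr)
  assume "\<not> 1 \<le> max (\<bar>A\<bar>^3) (B^2)"
  then have "max (\<bar>A\<bar>^3) (B^2) \<le> 0" by linarith
  then have "A = 0" "B = 0" by simp_all
  then have "wdisc a1 a2 a3 a4 a6 = 0"
    using assms(2,3) wc4_cube_minus_wc6_square[of a1 a2 a3 a4 a6] by simp
  with assms(1) show False by (simp add: global_minimal_def)
qed

lemma ln_12_le: "ln (12::real) \<le> 2.9"
proof -
  have "(12::real) \<le> (1 + 1.45 + 1.45^2 / 2)^2" by (simp add: power2_eq_square)
  also have "\<dots> \<le> exp 1.45 ^ 2"
    by (intro power_mono exp_lower_Taylor_quadratic) simp_all
  also have "\<dots> = exp 2.9" by (simp flip: exp_add add: power2_eq_square)
  finally show ?thesis using ln_mono[of 12 "exp 2.9"] by simp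
qed

lemma hpt_chord_add_le:
  fixes A B s x1 x2 :: int
  assumes "on_curve A B P" "on_curve A B Q" "0 < s" "s \<le> x1" "x1 < x2"
    and "fst P = of_int x1 / of_int s" "fst Q = of_int x2 / of_int s"
    and "\<bar>A\<bar> * s^2 \<le> x1^2" "\<bar>B\<bar> * s^3 \<le> x1^3"
  shows "hpt (chord_add P Q) \<le> ln 12 + ln (real_of_int x1) + 2 * ln (real_of_int x2)"
proof -
  let ?D = "s * (x2 - x1)^2"
  obtain m where m: "m^2 = (x1^3 + A * s^2 * x1 + B * s^3) * (x2^3 + A * s^2 * x2 + B * s^3)"
    and x3: "fst (chord_add P Q)
               = of_int ((x1 * x2 + A * s^2) * (x1 + x2) + 2 * B * s^3 - 2 * m) / of_int ?D"
    using chord_add_x_int_quotient[OF assms(1-3) _ assms(6,7)] assms(5) by blast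
  let ?N = "(x1 * x2 + A * s^2) * (x1 + x2) + 2 * B * s^3 - 2 * m"
  have "\<bar>(x1 * x2 + A * s^2) * (x1 + x2) + 2 * (B * s^3) - 2 * m\<bar> \<le> 12 * (x1 * x2^2)"
    using chord_numerator_abs_le[of x1 x2 "A * s^2" "B * s^3" m] m assms(3-5,8,9)
    by (simp add: abs_mult)
  then have N: "\<bar>?N\<bar> \<le> 12 * (x1 * x2^2)"
    by (simp add: mult.assoc)
  have "(x2 - x1)^2 \<le> x2^2" using assms(3-5) by (simp add: power_mono)
  then have "s * (x2 - x1)^2 \<le> x1 * x2^2"
    using assms(3-5) mult_mono[of s x1 "(x2 - x1)^2" "x2^2"] by simp
  moreover have "0 \<le> x1 * x2^2" using assms(3,4) by simp
  ultimately have D: "0 < ?D" "?D \<le> 12 * (x1 * x2^2)"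
    using assms(3,5) by simp_all
  have "hpt (chord_add P Q) \<le> ln (real_of_int (max \<bar>?N\<bar> ?D))"
    unfolding hpt_def x3 using D(1) by (rule hgt_of_int_div_le)
  also have "\<dots> \<le> ln (real_of_int (12 * (x1 * x2^2)))"
    using N D
    by (intro ln_mono)
      (simp_all only: of_int_le_iff of_int_0_less_iff max.bounded_iff less_max_iff_disj, simp_all)
  also have "\<dots> = ln 12 + ln (real_of_int x1) + 2 * ln (real_of_int x2)"
    using assms(3-5) by (simp add: ln_mult power2_eq_square)
  finally show ?thesis .
qed

theorem lemma3p2:
  fixes a1 a2 a3 a4 a6 A B x1 x2 s :: int and \<delta> :: real and P Q :: "rat \<times> rat"
  assumes "global_minimal a1 a2 a3 a4 a6"
    and "A = -27 * wc4 a1 a2 a3 a4 a6"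
    and "B = -54 * wc6 a1 a2 a3 a4 a6"
    and "0 \<le> \<delta>" and "\<delta> \<le> 1"
    and "on_curve A B P" and "on_curve A B Q"
    and "real_of_int (max (\<bar>A\<bar>^3) (B^2)) powr (1/6) \<le> real_of_rat (fst P)"
    and "fst P < fst Q"
    and "s > 0"
    and "fst P = of_int x1 / of_int s" and "fst Q = of_int x2 / of_int s"
    and "real_of_int (gcd x1 s) \<le> real_of_int s powr \<delta>"
    and "real_of_int (gcd x2 s) \<le> real_of_int s powr \<delta>"
  shows "hpt (chord_add P Q) \<le> hpt P + 2 * hpt Q + 3 * \<delta> * hgt (of_int s) + 2.9"
proof -
  have "1 \<le> max (\<bar>A\<bar>^3) (B^2)"
    using assms(1-3) by (rule global_minimal_short_coeffs_nonzero)
  moreover have "real_of_int (max (\<bar>A\<bar>^3) (B^2)) powr (1/6) \<le> real_of_int x1 / real_of_int s"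
    using assms(8) by (simp add: assms(11) of_rat_divide)
  ultimately have x1: "s \<le> x1" "\<bar>A\<bar> * s^2 \<le> x1^2" "\<bar>B\<bar> * s^3 \<le> x1^3"
    using scaled_coeffs_le_of_powr_le assms(10) by blast+
  have "x1 < x2" using assms(9-12) by (simp add: divide_less_cancel)
  have "hpt (chord_add P Q) \<le> ln 12 + ln (real_of_int x1) + 2 * ln (real_of_int x2)"
    using hpt_chord_add_le[OF assms(6,7,10) x1(1) \<open>x1 < x2\<close> assms(11,12) x1(2,3)] .
  moreover have "ln (real_of_int x1) \<le> hpt P + \<delta> * ln (real_of_int s)"
    using ln_le_hgt_of_int_div[OF assms(10) x1(1) assms(13)] by (simp add: hpt_def assms(11))
  moreover have "ln (real_of_int x2) \<le> hpt Q + \<delta> * ln (real_of_int s)"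
    using ln_le_hgt_of_int_div[OF assms(10) _ assms(14)] x1(1) \<open>x1 < x2\<close>
    by (simp add: hpt_def assms(12))
  moreover have "3 * \<delta> * hgt (of_int s) = 3 * (\<delta> * ln (real_of_int s))"
    using hgt_of_int_div[of 1 s] assms(10) by simp
  ultimately show ?thesis using ln_12_le by linarith
qed

end
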